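(* Let $\hat\rho$ be a density operator on $L^2(\mathbb R)$ with bounded Fock support. Then there exists a unique $m\in\mathbb N$ such that $\hat\rho\in\mathcal D^m\setminus\mathcal D^{m-1}$ (with the convention $\mathcal D^{-1}=\emptyset$). Moreover, $\mathcal V_t[\hat\rho]/\mathrm{Tr}\,\mathcal V_t[\hat\rho]$ converges to $\frac1{2^m}\sum_{k=0}^m\binom mk|k\rangle\langle k|$ as $t\to\infty$.
   Context: Let $\hat a$ be the annihilation operator on $L^2(\mathbb R)$, $\hat n=\hat a^\dagger\hat a$, $\{|k\rangle\}$ the Fock basis, and $\hat P_N=\sum_{k=0}^N|k\rangle\langle k|$. $\mathcal D^N$ is the set of density operators $\hat\rho$ with $\hat P_N\hat\rho\hat P_N=\hat\rho$; a density operator has bounded Fock support if it lies in some $\mathcal D^N$. For $t>0$, the Vertigo map on such operators is $\mathcal V_t[\hat A]=\sum_{k\ge0}\frac{(t-1)^k}{k!}t^{\hat n/2}\hat a^k\hat A\hat a^{\dagger k}t^{\hat n/2}$ (finite sum), equivalently characterized on Wigner functions $W_{\hat A}(\alpha)=\frac2\pi\mathrm{Tr}[\hat A\hat D(\alpha)(-1)^{\hat n}\hat D(\alpha)^\dagger]$, $\hat D(\alpha)=\exp(\alpha\hat a^\dagger-\alpha^*\hat a)$, by $W_{\mathcal V_t[\hat A]}(\alpha)=W_{\hat A}(\sqrt t\alpha)e^{2(t-1)|\alpha|^2}$. *)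

theory Defs
  imports "HOL-Analysis.Analysis"
begin

text \<open>Operators on L^2(R) are represented by their matrix elements in the Fock basis:
  an operator A is the function (i,j) |-> <i|A|j>. All operators occurring here
  (density operators with bounded Fock support, a, a^dagger, t^(n/2)) map the finite
  span of Fock states into itself, so all sums below have only finitely many nonzero terms.\<close>

type_synonym fmat = "nat \<Rightarrow> nat \<Rightarrow> complex"

definition mat_mult :: "fmat \<Rightarrow> fmat \<Rightarrow> fmat" where
  "mat_mult M N = (\<lambda>i j. \<Sum>\<^sub>\<infinity>l. M i l * N l j)"

definition adj :: "fmat \<Rightarrow> fmat" where
  "adj M = (\<lambda>i j. cnj (M j i))"

definition id_mat :: fmat where
  "id_mat = (\<lambda>i j. if i = j then 1 else 0)"

definition ann :: fmat where
  "ann = (\<lambda>i j. if j = Suc i then complex_of_real (sqrt (real j)) else 0)"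

definition ann_pow :: "nat \<Rightarrow> fmat" where
  "ann_pow k = (mat_mult ann ^^ k) id_mat"

definition tn_half :: "real \<Rightarrow> fmat" where
  "tn_half t = (\<lambda>i j. if i = j then complex_of_real (t powr (real i / 2)) else 0)"

definition trace :: "fmat \<Rightarrow> complex" where
  "trace A = (\<Sum>\<^sub>\<infinity>i. A i i)"

definition density_op :: "fmat \<Rightarrow> bool" where
  "density_op \<rho> \<longleftrightarrow>
     (\<forall>i j. \<rho> i j = cnj (\<rho> j i)) \<and>
     (\<forall>(v :: nat \<Rightarrow> complex) M.
        (\<Sum>i\<le>M. \<Sum>j\<le>M. cnj (v i) * \<rho> i j * v j) \<in> \<real> \<and>
        0 \<le> Re (\<Sum>i\<le>M. \<Sum>j\<le>M. cnj (v i) * \<rho> i j * v j)) \<and>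
     trace \<rho> = 1"

text \<open>D^N: density operators with P_N rho P_N = rho.\<close>
definition in_D :: "nat \<Rightarrow> fmat \<Rightarrow> bool" where
  "in_D N \<rho> \<longleftrightarrow> density_op \<rho> \<and> (\<forall>i j. (N < i \<or> N < j) \<longrightarrow> \<rho> i j = 0)"

definition bounded_fock_support :: "fmat \<Rightarrow> bool" where
  "bounded_fock_support \<rho> \<longleftrightarrow> (\<exists>N. in_D N \<rho>)"

text \<open>Vertigo map V_t[A] = sum_k (t-1)^k/k! t^(n/2) a^k A a^dagger^k t^(n/2).\<close>
definition vertigo :: "real \<Rightarrow> fmat \<Rightarrow> fmat" where
  "vertigo t A = (\<lambda>i j. \<Sum>\<^sub>\<infinity>k. complex_of_real ((t - 1) ^ k / fact k) *
      mat_mult (tn_half t) (mat_mult (ann_pow k) (mat_mult A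
        (mat_mult (adj (ann_pow k)) (tn_half t)))) i j)"

definition binom_state :: "nat \<Rightarrow> fmat" where
  "binom_state m = (\<lambda>i j. if i = j \<and> i \<le> m
      then complex_of_real (real (m choose i) / 2 ^ m) else 0)"

end

theory Submission
  imports Defs
begin

text \<open>In the Fock basis the Vertigo map reads
  V_t[\<rho>]_ij = \<Sum>_k (t-1)^k/k! t^((i+j)/2) sqrt((i+k)!/i!) sqrt((j+k)!/j!) \<rho>_(i+k)(j+k).
  If \<rho> is supported on {0..m}, every nonzero summand grows at most like t^m, and exactly like t^m
  only when i = j = m - k, with coefficient (m choose i) \<rho>_mm. Hence V_t[\<rho>]/t^m tends to the
  diagonal matrix with entries (m choose i) \<rho>_mm, and its trace to 2^m \<rho>_mm. For the minimal m
  the entry \<rho>_mm is nonzero: in a positive semidefinite matrix a vanishing diagonal entry forces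
  its row and column to vanish, which would put \<rho> into D^(m-1), or make it zero if m = 0.\<close>

lemma infsum_nat_eq_sum_atMost:
  fixes f :: "nat \<Rightarrow> 'a::{comm_monoid_add, t2_space}"
  assumes "\<And>l. N < l \<Longrightarrow> f l = 0"
  shows "infsum f UNIV = (\<Sum>l\<le>N. f l)"
  using infsum_cong_neutral[of UNIV "{..N}" f f] assms by auto

lemma infsum_eq_single:
  fixes f :: "'b \<Rightarrow> 'a::{comm_monoid_add, t2_space}"
  assumes "\<And>l. l \<noteq> c \<Longrightarrow> f l = 0"
  shows "infsum f UNIV = f c"
  using infsum_cong_neutral[of UNIV "{c}" f f] assms by auto

lemma mat_mult_single_left:
  assumes "\<And>l. l \<noteq> c \<Longrightarrow> M i l = 0"
  shows "mat_mult M N i j = M i c * N c j"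
  unfolding mat_mult_def by (rule infsum_eq_single) (simp add: assms)

lemma mat_mult_single_right:
  assumes "\<And>l. l \<noteq> c \<Longrightarrow> N l j = 0"
  shows "mat_mult M N i j = M i c * N c j"
  unfolding mat_mult_def by (rule infsum_eq_single) (simp add: assms)

definition ann_coeff :: "nat \<Rightarrow> nat \<Rightarrow> real" where
  "ann_coeff k i = sqrt (fact (i + k) / fact i)"

lemma ann_coeff_Suc: "sqrt (real (Suc i)) * ann_coeff k (Suc i) = ann_coeff (Suc k) i"
proof -
  have "real (Suc i) * (fact (Suc i + k) / fact (Suc i)) = fact (i + Suc k) / fact i"
    by (simp add: fact_Suc[of i] del: fact_Suc)
  then show ?thesis unfolding ann_coeff_def by (metis real_sqrt_mult)
qed

lemma ann_pow_eq: "ann_pow k i j = (if j = i + k then complex_of_real (ann_coeff k i) else 0)"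
proof (induction k arbitrary: i j)
  case 0
  then show ?case by (simp add: ann_pow_def id_mat_def ann_coeff_def)
next
  case (Suc k)
  have "ann_pow (Suc k) i j = mat_mult ann (ann_pow k) i j"
    by (simp add: ann_pow_def)
  also have "\<dots> = ann i (Suc i) * ann_pow k (Suc i) j"
    by (rule mat_mult_single_left) (simp add: ann_def)
  finally show ?case
    using Suc ann_coeff_Suc[of i k] by (auto simp: ann_def simp flip: of_real_mult)
qed

lemma vertigo_summand_eq:
  "mat_mult (tn_half t) (mat_mult (ann_pow k) (mat_mult A
        (mat_mult (adj (ann_pow k)) (tn_half t)))) i j =
   complex_of_real (t powr ((real i + real j) / 2) * ann_coeff k i * ann_coeff k j) * A (i + k) (j + k)"
proof -
  have right: "mat_mult (adj (ann_pow k)) (tn_half t) l j =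
      (if l = j + k then complex_of_real (ann_coeff k j * t powr (real j / 2)) else 0)" for l
    by (subst mat_mult_single_right[where c = j]) (auto simp: tn_half_def adj_def ann_pow_eq)
  have "mat_mult A (mat_mult (adj (ann_pow k)) (tn_half t)) l j =
      A l (j + k) * complex_of_real (ann_coeff k j * t powr (real j / 2))" for l
    by (subst mat_mult_single_right[where c = "j + k"]) (auto simp: right)
  moreover have "mat_mult (ann_pow k) M i' j = complex_of_real (ann_coeff k i') * M (i' + k) j"
    for M i' by (subst mat_mult_single_left[where c = "i' + k"]) (auto simp: ann_pow_eq)
  moreover have "mat_mult (tn_half t) M i j = complex_of_real (t powr (real i / 2)) * M i j" for M
    by (subst mat_mult_single_left[where c = i]) (auto simp: tn_half_def)
  ultimately show ?thesis
    by (simp add: add_divide_distrib powr_add mult_ac)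
qed

definition fock_support_le :: "nat \<Rightarrow> fmat \<Rightarrow> bool" where
  "fock_support_le m A \<longleftrightarrow> (\<forall>i j. m < i \<or> m < j \<longrightarrow> A i j = 0)"

lemma fock_support_leD: "fock_support_le m A \<Longrightarrow> m < i \<or> m < j \<Longrightarrow> A i j = 0"
  unfolding fock_support_le_def by blast

lemma vertigo_eq_sum:
  assumes "fock_support_le m A"
  shows "vertigo t A i j = (\<Sum>k\<le>m. complex_of_real ((t - 1) ^ k * t powr ((real i + real j) / 2))
      * complex_of_real (ann_coeff k i * ann_coeff k j / fact k) * A (i + k) (j + k))"
  unfolding vertigo_def vertigo_summand_eq
proof (subst infsum_nat_eq_sum_atMost[of m], goal_cases)
  case (1 k)
  then show ?case by (simp add: fock_support_leD[OF assms])
next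
  case 2
  have summand: "complex_of_real ((t - 1) ^ k / fact k) *
      (complex_of_real (t powr ((real i + real j) / 2) * ann_coeff k i * ann_coeff k j) * A (i + k) (j + k))
    = complex_of_real ((t - 1) ^ k * t powr ((real i + real j) / 2))
      * complex_of_real (ann_coeff k i * ann_coeff k j / fact k) * A (i + k) (j + k)" for k
    by (simp only: mult.assoc flip: of_real_mult) (simp add: field_simps)
  show ?case by (rule sum.cong[OF refl summand])
qed

lemma vertigo_eq_0:
  assumes "fock_support_le m A" and "m < i"
  shows "vertigo t A i j = 0"
  using assms by (simp add: vertigo_eq_sum fock_support_leD)

lemma trace_vertigo_eq_sum:
  assumes "fock_support_le m A"
  shows "trace (vertigo t A) = (\<Sum>i\<le>m. vertigo t A i i)"
  unfolding trace_def by (rule infsum_nat_eq_sum_atMost) (simp add: vertigo_eq_0[OF assms])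

lemma tendsto_power_powr_div_power:
  fixes e :: real
  assumes "real k + e \<le> real m"
  shows "((\<lambda>t. (t - 1) ^ k * t powr e / t ^ m) \<longlongrightarrow> (if real k + e = real m then 1 else 0)) at_top"
proof -
  define d where "d = real k + e - real m"
  have "((\<lambda>t::real. 1 - inverse t) \<longlongrightarrow> 1 - 0) at_top"
    by (intro tendsto_intros tendsto_inverse_0_at_top filterlim_ident)
  then have "((\<lambda>t::real. (1 - inverse t) ^ k) \<longlongrightarrow> 1) at_top"
    using tendsto_power by fastforce
  moreover have "((\<lambda>t::real. t powr d) \<longlongrightarrow> (if d = 0 then 1 else 0)) at_top"
  proof (cases "d = 0")
    case False
    with assms have "d < 0" unfolding d_def by linarith
    then show ?thesis using tendsto_neg_powr[OF _ filterlim_ident] by simp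
  next
    case True
    have "\<forall>\<^sub>F t in at_top. t powr d = (1::real)"
      using eventually_gt_at_top[of 0] by eventually_elim (simp add: True)
    then show ?thesis using True tendsto_eventually by fastforce
  qed
  ultimately have "((\<lambda>t::real. (1 - inverse t) ^ k * t powr d) \<longlongrightarrow> (if d = 0 then 1 else 0)) at_top"
    using tendsto_mult by fastforce
  moreover have "\<forall>\<^sub>F t in at_top. (1 - inverse t) ^ k * t powr d = (t - 1) ^ k * t powr e / t ^ m"
    using eventually_gt_at_top[of 0]
  proof eventually_elim
    case (elim t)
    then have "(1 - inverse t) ^ k = (t - 1) ^ k / t powr real k"
      by (simp add: field_simps powr_realpow)
    moreover have "t powr d = t powr real k * t powr e / t ^ m"
      unfolding d_def using elim by (simp add: powr_add powr_diff powr_realpow)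
    ultimately show ?case using elim by simp
  qed
  ultimately show ?thesis
    unfolding d_def by (simp add: tendsto_cong)
qed

lemma ann_coeff_square_div_fact:
  assumes "i \<le> m"
  shows "ann_coeff (m - i) i * ann_coeff (m - i) i / fact (m - i) = real (m choose i)"
  using assms by (simp add: ann_coeff_def binomial_fact)

lemma vertigo_div_power_tendsto:
  assumes supp: "fock_support_le m A"
  shows "((\<lambda>t. vertigo t A i j / complex_of_real (t ^ m))
    \<longlongrightarrow> (if i = j \<and> i \<le> m then of_nat (m choose i) * A m m else 0)) at_top"
proof -
  define c where "c k = complex_of_real (ann_coeff k i * ann_coeff k j / fact k)" for k
  define e where "e = (real i + real j) / 2"
  have summand: "((\<lambda>t. complex_of_real ((t - 1) ^ k * t powr e / t ^ m) * c k * A (i + k) (j + k))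
      \<longlongrightarrow> (if i = j \<and> i + k = m then c k * A m m else 0)) at_top" for k
  proof (cases "A (i + k) (j + k) = 0")
    case False
    then have "i + k \<le> m" "j + k \<le> m"
      using fock_support_leD[OF supp] by (meson not_le)+
    then have "2 * k + i + j \<le> 2 * m" "2 * k + i + j = 2 * m \<longleftrightarrow> i = j \<and> i + k = m"
      by linarith+
    moreover have "real k + e \<le> real m \<longleftrightarrow> 2 * k + i + j \<le> 2 * m"
      unfolding e_def by (subst of_nat_le_iff[where 'a=real, symmetric]) (simp add: field_simps)
    moreover have "real k + e = real m \<longleftrightarrow> 2 * k + i + j = 2 * m"
      unfolding e_def by (subst of_nat_eq_iff[where 'a=real, symmetric]) (simp add: field_simps)
    ultimately have "real k + e \<le> real m" "real k + e = real m \<longleftrightarrow> i = j \<and> i + k = m"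
      by simp_all
    with tendsto_power_powr_div_power[OF this(1)]
    have "((\<lambda>t. (t - 1) ^ k * t powr e / t ^ m) \<longlongrightarrow> (if i = j \<and> i + k = m then 1 else 0)) at_top"
      by simp
    then have "((\<lambda>t. complex_of_real ((t - 1) ^ k * t powr e / t ^ m) * c k * A (i + k) (j + k))
        \<longlongrightarrow> complex_of_real (if i = j \<and> i + k = m then 1 else 0) * c k * A (i + k) (j + k)) at_top"
      by (intro tendsto_mult_right tendsto_of_real)
    then show ?thesis by (cases "i = j \<and> i + k = m") auto
  qed auto
  have expand: "(\<lambda>t. vertigo t A i j / complex_of_real (t ^ m)) =
      (\<lambda>t. \<Sum>k\<le>m. complex_of_real ((t - 1) ^ k * t powr e / t ^ m) * c k * A (i + k) (j + k))"
    by (simp add: vertigo_eq_sum[OF supp] sum_divide_distrib c_def e_def mult_ac)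
  have limit: "(\<Sum>k\<le>m. if i = j \<and> i + k = m then c k * A m m else 0) =
      (if i = j \<and> i \<le> m then of_nat (m choose i) * A m m else 0)"
  proof (cases "i = j \<and> i \<le> m")
    case True
    then have "i = j \<and> i + k = m \<longleftrightarrow> k = m - i" for k
      by auto
    then have "(\<Sum>k\<le>m. if i = j \<and> i + k = m then c k * A m m else 0) = c (m - i) * A m m"
      by (simp only:) simp
    then show ?thesis using True by (simp add: c_def ann_coeff_square_div_fact)
  qed (auto intro!: sum.neutral)
  show ?thesis
    unfolding expand limit[symmetric] by (intro tendsto_sum summand)
qed

lemma trace_vertigo_div_power_tendsto:
  assumes supp: "fock_support_le m A"
  shows "((\<lambda>t. trace (vertigo t A) / complex_of_real (t ^ m)) \<longlongrightarrow> 2 ^ m * A m m) at_top"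
proof -
  have "((\<lambda>t. \<Sum>i\<le>m. vertigo t A i i / complex_of_real (t ^ m))
      \<longlongrightarrow> (\<Sum>i\<le>m. of_nat (m choose i) * A m m)) at_top"
  proof (intro tendsto_sum)
    fix i assume "i \<in> {..m}"
    then show "((\<lambda>t. vertigo t A i i / complex_of_real (t ^ m)) \<longlongrightarrow> of_nat (m choose i) * A m m) at_top"
      using vertigo_div_power_tendsto[OF supp, of i i] by simp
  qed
  moreover have "(\<Sum>i\<le>m. of_nat (m choose i) * A m m) = 2 ^ m * A m m"
    by (simp flip: sum_distrib_right of_nat_sum add: choose_row_sum)
  ultimately show ?thesis
    by (simp add: trace_vertigo_eq_sum[OF supp] sum_divide_distrib)
qed

lemma vertigo_normalized_tendsto:
  assumes supp: "fock_support_le m A" and nz: "A m m \<noteq> 0"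
  shows "((\<lambda>t. vertigo t A i j / trace (vertigo t A)) \<longlongrightarrow> binom_state m i j) at_top"
proof -
  let ?scaled = "\<lambda>t. (vertigo t A i j / complex_of_real (t ^ m)) / (trace (vertigo t A) / complex_of_real (t ^ m))"
  have eventually_eq: "\<forall>\<^sub>F t in at_top. ?scaled t = vertigo t A i j / trace (vertigo t A)"
    using eventually_gt_at_top[of 0] by eventually_elim simp
  have scaled_tendsto: "(?scaled \<longlongrightarrow> (if i = j \<and> i \<le> m then of_nat (m choose i) * A m m else 0) / (2 ^ m * A m m)) at_top"
    by (rule tendsto_divide[OF vertigo_div_power_tendsto[OF supp] trace_vertigo_div_power_tendsto[OF supp]])
      (simp add: nz)
  have limit_eq: "(if i = j \<and> i \<le> m then of_nat (m choose i) * A m m else 0) / (2 ^ m * A m m) = binom_state m i j"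
    using nz by (simp add: binom_state_def)
  show ?thesis
    using tendsto_cong[OF eventually_eq] scaled_tendsto unfolding limit_eq by blast
qed

lemma in_D_iff_fock_support_le: "in_D m \<rho> \<longleftrightarrow> density_op \<rho> \<and> fock_support_le m \<rho>"
  by (simp add: in_D_def fock_support_le_def)

lemma density_op_hermitian: "density_op \<rho> \<Longrightarrow> \<rho> i j = cnj (\<rho> j i)"
  unfolding density_op_def by blast

lemma density_op_trace: "density_op \<rho> \<Longrightarrow> trace \<rho> = 1"
  unfolding density_op_def by blast

lemma density_op_quadratic_form_nonneg:
  "density_op \<rho> \<Longrightarrow> 0 \<le> Re (\<Sum>i\<le>M. \<Sum>j\<le>M. cnj (v i) * \<rho> i j * v j)"
  unfolding density_op_def by blast

lemma density_op_column_eq_0: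
  assumes dens: "density_op \<rho>" and diag: "\<rho> m m = 0"
  shows "\<rho> j m = 0"
proof (rule ccontr)
  define a where "a = \<rho> j j"
  define b where "b = \<rho> j m"
  assume "\<rho> j m \<noteq> 0"
  then have "j \<noteq> m" and norm_pos: "(cmod b)\<^sup>2 > 0"
    using diag by (auto simp: b_def)
  define x where "x = (\<bar>Re a\<bar> + 1) / (2 * (cmod b)\<^sup>2)"
  define s where "s = - complex_of_real x * cnj b"
  define v where "v l = (if l = j then 1 else if l = m then s else 0)" for l
  define M where "M = max j m"
  have sum_two: "(\<Sum>l\<le>M. f l) = f j + f m" if "\<And>l. l \<noteq> j \<Longrightarrow> l \<noteq> m \<Longrightarrow> f l = 0"
    for f :: "nat \<Rightarrow> complex"
    using \<open>j \<noteq> m\<close> that by (subst sum.mono_neutral_right[of "{..M}" "{j, m}"]) (auto simp: M_def)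
  \<comment> \<open>as \<open>\<rho> m m = 0\<close>, the form at \<open>v = e\<^sub>j + s e\<^sub>m\<close> is affine in \<open>s\<close>, hence can be made negative\<close>
  have v_j: "v j = 1" and v_m: "v m = s" and v_other: "\<And>l. l \<noteq> j \<Longrightarrow> l \<noteq> m \<Longrightarrow> v l = 0"
    using \<open>j \<noteq> m\<close> by (simp_all add: v_def)
  have "(\<Sum>l\<le>M. cnj (v i) * \<rho> i l * v l) = cnj (v i) * (\<rho> i j + \<rho> i m * s)" for i
    using sum_two[of "\<lambda>l. cnj (v i) * \<rho> i l * v l"] by (simp add: v_j v_m v_other distrib_left)
  then have "(\<Sum>i\<le>M. \<Sum>l\<le>M. cnj (v i) * \<rho> i l * v l) = (\<Sum>i\<le>M. cnj (v i) * (\<rho> i j + \<rho> i m * s))"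
    by simp
  also have "\<dots> = (\<rho> j j + \<rho> j m * s) + cnj s * (\<rho> m j + \<rho> m m * s)"
    using sum_two[of "\<lambda>i. cnj (v i) * (\<rho> i j + \<rho> i m * s)"] by (simp add: v_j v_m v_other)
  also have "\<dots> = a + b * s + cnj (b * s)"
    using diag density_op_hermitian[OF dens, of m j] by (simp add: a_def b_def)
  also have "b * s = - complex_of_real x * (b * cnj b)"
    by (simp add: s_def)
  also have "\<dots> = - complex_of_real (x * (cmod b)\<^sup>2)"
    by (simp only: of_real_mult complex_norm_square minus_mult_left)
  also have "\<dots> = - complex_of_real ((\<bar>Re a\<bar> + 1) / 2)"
    using norm_pos by (simp add: x_def)
  finally have "Re (\<Sum>i\<le>M. \<Sum>l\<le>M. cnj (v i) * \<rho> i l * v l) = Re a - \<bar>Re a\<bar> - 1"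
    by simp
  moreover have "0 \<le> Re (\<Sum>i\<le>M. \<Sum>l\<le>M. cnj (v i) * \<rho> i l * v l)"
    by (rule density_op_quadratic_form_nonneg[OF dens])
  ultimately show False by linarith
qed

lemma in_D_mono: "in_D m \<rho> \<Longrightarrow> m \<le> n \<Longrightarrow> in_D n \<rho>"
  unfolding in_D_def by (meson le_less_trans)

lemma in_D_minimal_iff_Least:
  assumes "bounded_fock_support \<rho>"
  shows "in_D m \<rho> \<and> (\<forall>m'. m = Suc m' \<longrightarrow> \<not> in_D m' \<rho>) \<longleftrightarrow> m = (LEAST n. in_D n \<rho>)"
proof
  assume m: "in_D m \<rho> \<and> (\<forall>m'. m = Suc m' \<longrightarrow> \<not> in_D m' \<rho>)"
  show "m = (LEAST n. in_D n \<rho>)"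
  proof (rule antisym)
    show "(LEAST n. in_D n \<rho>) \<le> m"
      using m by (simp add: Least_le)
    show "m \<le> (LEAST n. in_D n \<rho>)"
    proof (rule ccontr)
      assume "\<not> m \<le> (LEAST n. in_D n \<rho>)"
      then obtain m' where "m = Suc m'" "(LEAST n. in_D n \<rho>) \<le> m'"
        by (metis less_eq_Suc_le not_le_imp_less Suc_le_D)
      moreover have "in_D (LEAST n. in_D n \<rho>) \<rho>"
        using assms unfolding bounded_fock_support_def by (rule LeastI_ex)
      ultimately show False
        using m in_D_mono by blast
    qed
  qed
next
  assume m: "m = (LEAST n. in_D n \<rho>)"
  show "in_D m \<rho> \<and> (\<forall>m'. m = Suc m' \<longrightarrow> \<not> in_D m' \<rho>)"
    using assms unfolding bounded_fock_support_def m
    by (auto intro: LeastI_ex dest: Least_le)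
qed

lemma in_D_minimal_diag_neq_0:
  assumes D: "in_D m \<rho>" and minimal: "\<forall>m'. m = Suc m' \<longrightarrow> \<not> in_D m' \<rho>"
  shows "\<rho> m m \<noteq> 0"
proof
  assume diag: "\<rho> m m = 0"
  have dens: "density_op \<rho>" and supp: "fock_support_le m \<rho>"
    using D by (simp_all add: in_D_iff_fock_support_le)
  have column: "\<rho> j m = 0" and row: "\<rho> m j = 0" for j
    using density_op_column_eq_0[OF dens diag] density_op_hermitian[OF dens, of m j] by simp_all
  show False
  proof (cases m)
    case 0
    have "\<rho> i i = 0" for i
      using fock_support_leD[OF supp, of i i] column[of 0] 0 by (cases i) auto
    then have "trace \<rho> = 0"
      by (simp add: trace_def)
    then show False
      using density_op_trace[OF dens] by simp
  next
    case (Suc m')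
    have "fock_support_le m' \<rho>"
      unfolding fock_support_le_def
      using fock_support_leD[OF supp] row column Suc by (metis Suc_lessI)
    then show False
      using minimal Suc dens by (simp add: in_D_iff_fock_support_le)
  qed
qed

theorem lemma12:
  fixes \<rho> :: fmat
  assumes "density_op \<rho>" and "bounded_fock_support \<rho>"
  shows "(\<exists>!m::nat. in_D m \<rho> \<and> (\<forall>m'. m = Suc m' \<longrightarrow> \<not> in_D m' \<rho>)) \<and>
         (\<forall>m::nat. in_D m \<rho> \<and> (\<forall>m'. m = Suc m' \<longrightarrow> \<not> in_D m' \<rho>) \<longrightarrow>
            (\<forall>i j. ((\<lambda>t. vertigo t \<rho> i j / trace (vertigo t \<rho>))
                     \<longlongrightarrow> binom_state m i j) at_top))"
proof (intro conjI allI impI)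
  show "\<exists>!m::nat. in_D m \<rho> \<and> (\<forall>m'. m = Suc m' \<longrightarrow> \<not> in_D m' \<rho>)"
    unfolding in_D_minimal_iff_Least[OF assms(2)] by simp
next
  fix m i j
  assume "in_D m \<rho> \<and> (\<forall>m'. m = Suc m' \<longrightarrow> \<not> in_D m' \<rho>)"
  then have "fock_support_le m \<rho>" and "\<rho> m m \<noteq> 0"
    using in_D_minimal_diag_neq_0 by (auto simp: in_D_iff_fock_support_le)
  then show "((\<lambda>t. vertigo t \<rho> i j / trace (vertigo t \<rho>)) \<longlongrightarrow> binom_state m i j) at_top"
    by (rule vertigo_normalized_tendsto)
qed

end
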